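(* Let $X\in\mathscr{C}^-$, $B\in\mathcal{H}$ and $x\in\mathscr{C}(X,B)$, and suppose there is a distinguished triangle $X\overset{x}{\to}B\to U\to X[1]$ with $U\in\mathcal{U}$. Let $z_X\colon X\to Z_X$ be obtained as follows: choose a distinguished triangle $V\to U'\overset{a}{\to}X\to V[1]$ with $U'\in\mathcal{U},V\in\mathcal{V}$; choose a distinguished triangle $T[-1]\to S[-1]\overset{b}{\to}U'\to T$ with $S\in\mathcal{S},T\in\mathcal{T}$; and choose a distinguished triangle $S[-1]\overset{a\circ b}{\to}X\overset{z_X}{\to}Z_X\to S$ (then $Z_X\in\mathcal{H}$). Then the unique morphism $\zeta\in\underline{\mathcal{H}}(Z_X,B)$ satisfying $\zeta\circ\underline{z}_X=\underline{x}$ in $\underline{\mathscr{C}}$ is an epimorphism in $\underline{\mathcal{H}}$.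
   Context: $\mathscr{C}$ is a triangulated category with shift $[1]$; subcategories are full, additive, closed under isomorphisms and direct summands. $\mathrm{Ext}^1(X,Y)=\mathscr{C}(X,Y[1])$. $\mathcal{M}\ast\mathcal{N}$ is the full subcategory of objects $C$ admitting a distinguished triangle $M\to C\to N\to M[1]$ with $M\in\mathcal{M}$, $N\in\mathcal{N}$. A cotorsion pair $(\mathcal{U},\mathcal{V})$: $\mathrm{Ext}^1(\mathcal{U},\mathcal{V})=0$ and $\mathscr{C}=\mathcal{U}\ast\mathcal{V}[1]$. Fix a twin cotorsion pair, i.e. cotorsion pairs $(\mathcal{S},\mathcal{T}),(\mathcal{U},\mathcal{V})$ with $\mathrm{Ext}^1(\mathcal{S},\mathcal{V})=0$. Put $\mathcal{W}=\mathcal{T}\cap\mathcal{U}$, $\mathscr{C}^-=\mathcal{S}[-1]\ast\mathcal{W}$, $\mathscr{C}^+=\mathcal{W}\ast\mathcal{V}[1]$, $\mathcal{H}=\mathscr{C}^+\cap\mathscr{C}^-$. $\underline{\mathscr{C}}$, $\underline{\mathcal{H}}$ are the ideal quotients of $\mathscr{C}$, $\mathcal{H}$ by morphisms factoring through objects of $\mathcal{W}$, and $\underline{f}$ is the image of $f$. (Existence and uniqueness of $\zeta$ hold since $-\circ\underline{z}_X\colon\underline{\mathscr{C}}(Z_X,Y)\to\underline{\mathscr{C}}(X,Y)$ is bijective for all $Y\in\mathscr{C}^+$.) *)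

theory Defs
  imports Main
begin

text \<open>A triangulated category presented concretely: a class of objects, hom-sets,
composition, identities, abelian-group structure on hom-sets, a shift functor
(an additive auto-equivalence) and a class of distinguished triangles
(X, Y, Z, f, g, h) standing for X --f--> Y --g--> Z --h--> X[1].\<close>

record ('o, 'm) tcat =
  Obj  :: "'o set"
  Hom  :: "'o \<Rightarrow> 'o \<Rightarrow> 'm set"
  Cmp  :: "'m \<Rightarrow> 'm \<Rightarrow> 'm"       (* Cmp g f = g \<circ> f *)
  Id   :: "'o \<Rightarrow> 'm"
  Add  :: "'m \<Rightarrow> 'm \<Rightarrow> 'm"
  Zero :: "'o \<Rightarrow> 'o \<Rightarrow> 'm"
  Neg  :: "'m \<Rightarrow> 'm"
  Sh   :: "'o \<Rightarrow> 'o"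
  ShM  :: "'m \<Rightarrow> 'm"
  Tri  :: "('o \<times> 'o \<times> 'o \<times> 'm \<times> 'm \<times> 'm) set"

definition is_iso :: "('o,'m) tcat \<Rightarrow> 'o \<Rightarrow> 'o \<Rightarrow> 'm \<Rightarrow> bool" where
  "is_iso C X Y f \<longleftrightarrow> f \<in> Hom C X Y \<and>
     (\<exists>g \<in> Hom C Y X. Cmp C g f = Id C X \<and> Cmp C f g = Id C Y)"

definition iso_ob :: "('o,'m) tcat \<Rightarrow> 'o \<Rightarrow> 'o \<Rightarrow> bool" where
  "iso_ob C X Y \<longleftrightarrow> (\<exists>f. is_iso C X Y f)"

definition zero_obj :: "('o,'m) tcat \<Rightarrow> 'o \<Rightarrow> bool" where
  "zero_obj C Oz \<longleftrightarrow> Oz \<in> Obj C \<and>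
     (\<forall>X \<in> Obj C. Hom C Oz X = {Zero C Oz X} \<and> Hom C X Oz = {Zero C X Oz})"

definition biprod :: "('o,'m) tcat \<Rightarrow> 'o \<Rightarrow> 'o \<Rightarrow> 'o \<Rightarrow> 'm \<Rightarrow> 'm \<Rightarrow> 'm \<Rightarrow> 'm \<Rightarrow> bool" where
  "biprod C X Y P i1 i2 p1 p2 \<longleftrightarrow>
     i1 \<in> Hom C X P \<and> i2 \<in> Hom C Y P \<and> p1 \<in> Hom C P X \<and> p2 \<in> Hom C P Y \<and>
     Cmp C p1 i1 = Id C X \<and> Cmp C p2 i2 = Id C Y \<and>
     Cmp C p2 i1 = Zero C X Y \<and> Cmp C p1 i2 = Zero C Y X \<and>
     Add C (Cmp C i1 p1) (Cmp C i2 p2) = Id C P"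

definition additive_cat :: "('o,'m) tcat \<Rightarrow> bool" where
  "additive_cat C \<longleftrightarrow>
     (\<forall>X Y. (X \<notin> Obj C \<or> Y \<notin> Obj C) \<longrightarrow> Hom C X Y = {}) \<and>
     (\<forall>X Y X' Y' f. f \<in> Hom C X Y \<and> f \<in> Hom C X' Y' \<longrightarrow> X = X' \<and> Y = Y') \<and>
     (\<forall>X Y Z f g. f \<in> Hom C X Y \<longrightarrow> g \<in> Hom C Y Z \<longrightarrow> Cmp C g f \<in> Hom C X Z) \<and>
     (\<forall>X Y Z W f g h. f \<in> Hom C X Y \<longrightarrow> g \<in> Hom C Y Z \<longrightarrow> h \<in> Hom C Z W \<longrightarrow>
        Cmp C h (Cmp C g f) = Cmp C (Cmp C h g) f) \<and>
     (\<forall>X \<in> Obj C. Id C X \<in> Hom C X X) \<and>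
     (\<forall>X Y f. f \<in> Hom C X Y \<longrightarrow> Cmp C f (Id C X) = f \<and> Cmp C (Id C Y) f = f) \<and>
     (\<forall>X \<in> Obj C. \<forall>Y \<in> Obj C. Zero C X Y \<in> Hom C X Y) \<and>
     (\<forall>X Y f g. f \<in> Hom C X Y \<longrightarrow> g \<in> Hom C X Y \<longrightarrow> Add C f g \<in> Hom C X Y) \<and>
     (\<forall>X Y f. f \<in> Hom C X Y \<longrightarrow> Neg C f \<in> Hom C X Y) \<and>
     (\<forall>X Y f g h. f \<in> Hom C X Y \<longrightarrow> g \<in> Hom C X Y \<longrightarrow> h \<in> Hom C X Y \<longrightarrow>
        Add C (Add C f g) h = Add C f (Add C g h)) \<and>
     (\<forall>X Y f g. f \<in> Hom C X Y \<longrightarrow> g \<in> Hom C X Y \<longrightarrow> Add C f g = Add C g f) \<and>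
     (\<forall>X Y f. f \<in> Hom C X Y \<longrightarrow> Add C f (Zero C X Y) = f) \<and>
     (\<forall>X Y f. f \<in> Hom C X Y \<longrightarrow> Add C f (Neg C f) = Zero C X Y) \<and>
     (\<forall>X Y Z f g h. f \<in> Hom C X Y \<longrightarrow> g \<in> Hom C X Y \<longrightarrow> h \<in> Hom C Y Z \<longrightarrow>
        Cmp C h (Add C f g) = Add C (Cmp C h f) (Cmp C h g)) \<and>
     (\<forall>X Y Z f g h. f \<in> Hom C Y Z \<longrightarrow> g \<in> Hom C Y Z \<longrightarrow> h \<in> Hom C X Y \<longrightarrow>
        Cmp C (Add C f g) h = Add C (Cmp C f h) (Cmp C g h)) \<and>
     (\<exists>Oz. zero_obj C Oz) \<and>
     (\<forall>X \<in> Obj C. \<forall>Y \<in> Obj C. \<exists>P i1 i2 p1 p2. biprod C X Y P i1 i2 p1 p2)"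

definition shift_ok :: "('o,'m) tcat \<Rightarrow> bool" where
  "shift_ok C \<longleftrightarrow>
     (\<forall>X \<in> Obj C. Sh C X \<in> Obj C) \<and>
     (\<forall>X Y f. f \<in> Hom C X Y \<longrightarrow> ShM C f \<in> Hom C (Sh C X) (Sh C Y)) \<and>
     (\<forall>X \<in> Obj C. ShM C (Id C X) = Id C (Sh C X)) \<and>
     (\<forall>X Y Z f g. f \<in> Hom C X Y \<longrightarrow> g \<in> Hom C Y Z \<longrightarrow>
        ShM C (Cmp C g f) = Cmp C (ShM C g) (ShM C f)) \<and>
     (\<forall>X Y f g. f \<in> Hom C X Y \<longrightarrow> g \<in> Hom C X Y \<longrightarrow>
        ShM C (Add C f g) = Add C (ShM C f) (ShM C g)) \<and>
     (\<forall>X \<in> Obj C. \<forall>Y \<in> Obj C. bij_betw (ShM C) (Hom C X Y) (Hom C (Sh C X) (Sh C Y))) \<and>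
     (\<forall>Y \<in> Obj C. \<exists>X \<in> Obj C. iso_ob C (Sh C X) Y)"

definition is_triangle :: "('o,'m) tcat \<Rightarrow> 'o \<times> 'o \<times> 'o \<times> 'm \<times> 'm \<times> 'm \<Rightarrow> bool" where
  "is_triangle C t \<longleftrightarrow> (case t of (X, Y, Z, f, g, h) \<Rightarrow>
     f \<in> Hom C X Y \<and> g \<in> Hom C Y Z \<and> h \<in> Hom C Z (Sh C X))"

definition tri_mor :: "('o,'m) tcat \<Rightarrow> 'o \<times> 'o \<times> 'o \<times> 'm \<times> 'm \<times> 'm \<Rightarrow>
    'o \<times> 'o \<times> 'o \<times> 'm \<times> 'm \<times> 'm \<Rightarrow> 'm \<Rightarrow> 'm \<Rightarrow> 'm \<Rightarrow> bool" where
  "tri_mor C t t' u v w \<longleftrightarrow> (case t of (X, Y, Z, f, g, h) \<Rightarrow> case t' of (X', Y', Z', f', g', h') \<Rightarrow>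
     u \<in> Hom C X X' \<and> v \<in> Hom C Y Y' \<and> w \<in> Hom C Z Z' \<and>
     Cmp C v f = Cmp C f' u \<and> Cmp C w g = Cmp C g' v \<and> Cmp C (ShM C u) h = Cmp C h' w)"

definition triangulated :: "('o,'m) tcat \<Rightarrow> bool" where
  "triangulated C \<longleftrightarrow> additive_cat C \<and> shift_ok C \<and>
     (\<forall>t \<in> Tri C. is_triangle C t) \<and>
     \<comment> \<open>TR1: closure under isomorphism of triangles\<close>
     (\<forall>t t' u v w. t \<in> Tri C \<longrightarrow> is_triangle C t' \<longrightarrow> tri_mor C t t' u v w \<longrightarrow>
        (case t of (X, Y, Z, _) \<Rightarrow> case t' of (X', Y', Z', _) \<Rightarrow>
           is_iso C X X' u \<and> is_iso C Y Y' v \<and> is_iso C Z Z' w) \<longrightarrow> t' \<in> Tri C) \<and>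
     \<comment> \<open>TR1: X --1--> X --> 0 --> X[1]\<close>
     (\<forall>X \<in> Obj C. \<forall>Oz. zero_obj C Oz \<longrightarrow>
        (X, X, Oz, Id C X, Zero C X Oz, Zero C Oz (Sh C X)) \<in> Tri C) \<and>
     \<comment> \<open>TR1: every morphism embeds in a distinguished triangle\<close>
     (\<forall>X Y f. f \<in> Hom C X Y \<longrightarrow> (\<exists>Z g h. (X, Y, Z, f, g, h) \<in> Tri C)) \<and>
     \<comment> \<open>TR2: rotation\<close>
     (\<forall>X Y Z f g h. f \<in> Hom C X Y \<longrightarrow> g \<in> Hom C Y Z \<longrightarrow> h \<in> Hom C Z (Sh C X) \<longrightarrow>
        ((X, Y, Z, f, g, h) \<in> Tri C \<longleftrightarrow> (Y, Z, Sh C X, g, h, Neg C (ShM C f)) \<in> Tri C)) \<and>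
     \<comment> \<open>TR3: completion of morphisms of triangles\<close>
     (\<forall>X Y Z f g h X' Y' Z' f' g' h' u v.
        (X, Y, Z, f, g, h) \<in> Tri C \<longrightarrow> (X', Y', Z', f', g', h') \<in> Tri C \<longrightarrow>
        u \<in> Hom C X X' \<longrightarrow> v \<in> Hom C Y Y' \<longrightarrow> Cmp C v f = Cmp C f' u \<longrightarrow>
        (\<exists>w. tri_mor C (X, Y, Z, f, g, h) (X', Y', Z', f', g', h') u v w)) \<and>
     \<comment> \<open>TR4: octahedral axiom\<close>
     (\<forall>X Y Z f g Z' f2 f3 X' g2 g3 Y' h2 h3.
        (X, Y, Z', f, f2, f3) \<in> Tri C \<longrightarrow> (Y, Z, X', g, g2, g3) \<in> Tri C \<longrightarrow>
        (X, Z, Y', Cmp C g f, h2, h3) \<in> Tri C \<longrightarrow>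
        (\<exists>u v. (Z', Y', X', u, v, Cmp C (ShM C f2) g3) \<in> Tri C \<and>
           Cmp C u f2 = Cmp C h2 g \<and> Cmp C h3 u = f3 \<and>
           Cmp C v h2 = g2 \<and> Cmp C g3 v = Cmp C (ShM C f) h3))"

text \<open>Subcategories: full (given by a class of objects), additive (contain a zero object
and are closed under finite direct sums), closed under isomorphisms and direct summands.\<close>
definition subcat :: "('o,'m) tcat \<Rightarrow> 'o set \<Rightarrow> bool" where
  "subcat C A \<longleftrightarrow> A \<subseteq> Obj C \<and> (\<exists>Oz \<in> A. zero_obj C Oz) \<and>
     (\<forall>X Y P i1 i2 p1 p2. X \<in> A \<longrightarrow> Y \<in> A \<longrightarrow> biprod C X Y P i1 i2 p1 p2 \<longrightarrow> P \<in> A) \<and>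
     (\<forall>X Y. X \<in> A \<longrightarrow> iso_ob C X Y \<longrightarrow> Y \<in> A) \<and>
     (\<forall>X Y P i1 i2 p1 p2. P \<in> A \<longrightarrow> biprod C X Y P i1 i2 p1 p2 \<longrightarrow> X \<in> A)"

text \<open>Ext^1(A,B) = C(A, B[1]) = 0 for all A in A, B in B.\<close>
definition Ext1_zero :: "('o,'m) tcat \<Rightarrow> 'o set \<Rightarrow> 'o set \<Rightarrow> bool" where
  "Ext1_zero C A B \<longleftrightarrow> (\<forall>X \<in> A. \<forall>Y \<in> B. Hom C X (Sh C Y) = {Zero C X (Sh C Y)})"

text \<open>B[1] (closed under isomorphisms) and A[-1] = objects M with M[1] in A.\<close>
definition shift_up :: "('o,'m) tcat \<Rightarrow> 'o set \<Rightarrow> 'o set" where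
  "shift_up C B = {N \<in> Obj C. \<exists>Y \<in> B. iso_ob C N (Sh C Y)}"

definition shift_down :: "('o,'m) tcat \<Rightarrow> 'o set \<Rightarrow> 'o set" where
  "shift_down C A = {M \<in> Obj C. Sh C M \<in> A}"

definition ext_star :: "('o,'m) tcat \<Rightarrow> 'o set \<Rightarrow> 'o set \<Rightarrow> 'o set" where
  "ext_star C M N = {Y \<in> Obj C. \<exists>A B f g h. A \<in> M \<and> B \<in> N \<and> (A, Y, B, f, g, h) \<in> Tri C}"

definition cotorsion_pair :: "('o,'m) tcat \<Rightarrow> 'o set \<Rightarrow> 'o set \<Rightarrow> bool" where
  "cotorsion_pair C U V \<longleftrightarrow> subcat C U \<and> subcat C V \<and> Ext1_zero C U V \<and>
     Obj C = ext_star C U (shift_up C V)"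

definition twin_cotorsion_pair :: "('o,'m) tcat \<Rightarrow> 'o set \<Rightarrow> 'o set \<Rightarrow> 'o set \<Rightarrow> 'o set \<Rightarrow> bool" where
  "twin_cotorsion_pair C S T U V \<longleftrightarrow>
     cotorsion_pair C S T \<and> cotorsion_pair C U V \<and> Ext1_zero C S V"

definition Wcore :: "'o set \<Rightarrow> 'o set \<Rightarrow> 'o set" where
  "Wcore T U = T \<inter> U"

definition Cminus :: "('o,'m) tcat \<Rightarrow> 'o set \<Rightarrow> 'o set \<Rightarrow> 'o set \<Rightarrow> 'o set" where
  "Cminus C S T U = ext_star C (shift_down C S) (Wcore T U)"

definition Cplus :: "('o,'m) tcat \<Rightarrow> 'o set \<Rightarrow> 'o set \<Rightarrow> 'o set \<Rightarrow> 'o set" where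
  "Cplus C T U V = ext_star C (Wcore T U) (shift_up C V)"

definition Hcore :: "('o,'m) tcat \<Rightarrow> 'o set \<Rightarrow> 'o set \<Rightarrow> 'o set \<Rightarrow> 'o set \<Rightarrow> 'o set" where
  "Hcore C S T U V = Cplus C T U V \<inter> Cminus C S T U"

text \<open>Ideal of morphisms factoring through an object of W; equality in the ideal quotient.\<close>
definition factors_through :: "('o,'m) tcat \<Rightarrow> 'o set \<Rightarrow> 'o \<Rightarrow> 'o \<Rightarrow> 'm \<Rightarrow> bool" where
  "factors_through C W X Y f \<longleftrightarrow>
     (\<exists>W0 \<in> W. \<exists>u \<in> Hom C X W0. \<exists>v \<in> Hom C W0 Y. f = Cmp C v u)"

definition quot_eq :: "('o,'m) tcat \<Rightarrow> 'o set \<Rightarrow> 'o \<Rightarrow> 'o \<Rightarrow> 'm \<Rightarrow> 'm \<Rightarrow> bool" where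
  "quot_eq C W X Y f g \<longleftrightarrow> f \<in> Hom C X Y \<and> g \<in> Hom C X Y \<and>
     factors_through C W X Y (Add C f (Neg C g))"

text \<open>The class of z (in Hom(Z,B), Z,B in H) is an epimorphism in the ideal
quotient of the full subcategory H by morphisms factoring through W.\<close>
definition quot_epi :: "('o,'m) tcat \<Rightarrow> 'o set \<Rightarrow> 'o set \<Rightarrow> 'o \<Rightarrow> 'o \<Rightarrow> 'm \<Rightarrow> bool" where
  "quot_epi C W H Z B z \<longleftrightarrow> Z \<in> H \<and> B \<in> H \<and> z \<in> Hom C Z B \<and>
     (\<forall>D \<in> H. \<forall>g \<in> Hom C B D. \<forall>h \<in> Hom C B D.
        quot_eq C W Z D (Cmp C g z) (Cmp C h z) \<longrightarrow> quot_eq C W B D g h)"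

end

theory Submission
  imports Defs
begin

text \<open>Two octahedra show that Z_X lies in H: Z_X is an extension of an object of W by V[1],
and the cone of a map from S[-1] to an object of C^- stays in C^-. Every map from S[-1] to
an object of C^+ through an object of U vanishes (it factors through the W-part, and
Ext^1(S, T) = 0), so x kills a b and factors through z_X.

For epimorphy, let k : B \<rightarrow> D with k \<zeta> factoring through W, and let W_D \<rightarrow> D \<rightarrow> N be the
C^+-triangle of D, with N \<in> V[1]. Maps from W to N vanish, so q k kills \<zeta> z_X and hence x;
thus q k factors through the cone of x, which lies in U, so q k = 0 and k factors
through W_D.\<close>

locale triangulated_cat =
  fixes C :: "('o, 'm) tcat"
  assumes triangulated: "triangulated C"
begin

section \<open>Additive structure\<close>

lemma additive: "additive_cat C"
  using triangulated unfolding triangulated_def by (elim conjE) assumption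

lemma hom_objs: "f \<in> Hom C X Y \<Longrightarrow> X \<in> Obj C \<and> Y \<in> Obj C"
  using additive unfolding additive_cat_def by (elim conjE) blast

lemma comp_hom [intro]: "f \<in> Hom C X Y \<Longrightarrow> g \<in> Hom C Y Z \<Longrightarrow> Cmp C g f \<in> Hom C X Z"
  using additive unfolding additive_cat_def by (elim conjE) blast

lemma comp_assoc:
  "f \<in> Hom C X Y \<Longrightarrow> g \<in> Hom C Y Z \<Longrightarrow> h \<in> Hom C Z W \<Longrightarrow>
    Cmp C h (Cmp C g f) = Cmp C (Cmp C h g) f"
  using additive unfolding additive_cat_def by (elim conjE) simp

lemma id_hom [intro]: "X \<in> Obj C \<Longrightarrow> Id C X \<in> Hom C X X"
  using additive unfolding additive_cat_def by (elim conjE) simp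

lemma comp_id_right [simp]: "f \<in> Hom C X Y \<Longrightarrow> Cmp C f (Id C X) = f"
  using additive unfolding additive_cat_def by (elim conjE) simp

lemma comp_id_left [simp]: "f \<in> Hom C X Y \<Longrightarrow> Cmp C (Id C Y) f = f"
  using additive unfolding additive_cat_def by (elim conjE) simp

lemma zero_hom [intro]: "X \<in> Obj C \<Longrightarrow> Y \<in> Obj C \<Longrightarrow> Zero C X Y \<in> Hom C X Y"
  using additive unfolding additive_cat_def by (elim conjE) simp

lemma add_hom [intro]: "f \<in> Hom C X Y \<Longrightarrow> g \<in> Hom C X Y \<Longrightarrow> Add C f g \<in> Hom C X Y"
  using additive unfolding additive_cat_def by (elim conjE) simp

lemma neg_hom [intro]: "f \<in> Hom C X Y \<Longrightarrow> Neg C f \<in> Hom C X Y"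
  using additive unfolding additive_cat_def by (elim conjE) simp

lemma add_assoc:
  "f \<in> Hom C X Y \<Longrightarrow> g \<in> Hom C X Y \<Longrightarrow> h \<in> Hom C X Y \<Longrightarrow>
    Add C (Add C f g) h = Add C f (Add C g h)"
  using additive unfolding additive_cat_def by (elim conjE) simp

lemma add_commute: "f \<in> Hom C X Y \<Longrightarrow> g \<in> Hom C X Y \<Longrightarrow> Add C f g = Add C g f"
  using additive unfolding additive_cat_def by (elim conjE) simp

lemma add_zero_right: "f \<in> Hom C X Y \<Longrightarrow> Add C f (Zero C X Y) = f"
  using additive unfolding additive_cat_def by (elim conjE) simp

lemma add_neg: "f \<in> Hom C X Y \<Longrightarrow> Add C f (Neg C f) = Zero C X Y"
  using additive unfolding additive_cat_def by (elim conjE) simp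

lemma comp_add_left:
  "f \<in> Hom C X Y \<Longrightarrow> g \<in> Hom C X Y \<Longrightarrow> h \<in> Hom C Y Z \<Longrightarrow>
    Cmp C h (Add C f g) = Add C (Cmp C h f) (Cmp C h g)"
  using additive unfolding additive_cat_def by (elim conjE) simp

lemma comp_add_right:
  "f \<in> Hom C Y Z \<Longrightarrow> g \<in> Hom C Y Z \<Longrightarrow> h \<in> Hom C X Y \<Longrightarrow>
    Cmp C (Add C f g) h = Add C (Cmp C f h) (Cmp C g h)"
  using additive unfolding additive_cat_def by (elim conjE) simp

lemma ex_zero_obj: "\<exists>Oz. zero_obj C Oz"
  using additive unfolding additive_cat_def by (elim conjE) assumption

lemma add_zero_left: "f \<in> Hom C X Y \<Longrightarrow> Add C (Zero C X Y) f = f"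
  by (metis add_commute add_zero_right hom_objs zero_hom)

lemma neg_unique:
  assumes f: "f \<in> Hom C X Y" and g: "g \<in> Hom C X Y" and sum: "Add C f g = Zero C X Y"
  shows "g = Neg C f"
proof -
  have "g = Add C g (Add C f (Neg C f))" using add_zero_right add_neg f g by metis
  also have "\<dots> = Add C (Add C g f) (Neg C f)" using add_assoc f g neg_hom by metis
  also have "\<dots> = Add C (Zero C X Y) (Neg C f)" using sum add_commute f g by metis
  also have "\<dots> = Neg C f" using add_zero_left neg_hom f by blast
  finally show ?thesis .
qed

lemma zero_if_add_self:
  assumes f: "f \<in> Hom C X Y" and idem: "Add C f f = f"
  shows "f = Zero C X Y"
proof -
  have "f = Add C f (Add C f (Neg C f))" using add_zero_right add_neg f by metis
  also have "\<dots> = Add C (Add C f f) (Neg C f)" using add_assoc f neg_hom by metis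
  also have "\<dots> = Zero C X Y" using idem add_neg f by simp
  finally show ?thesis .
qed

lemma comp_zero_right [simp]:
  assumes g: "g \<in> Hom C Y Z" and X: "X \<in> Obj C"
  shows "Cmp C g (Zero C X Y) = Zero C X Z"
proof -
  have z: "Zero C X Y \<in> Hom C X Y" using X g hom_objs by blast
  have "Cmp C g (Zero C X Y) = Cmp C g (Add C (Zero C X Y) (Zero C X Y))"
    using add_zero_right z by simp
  also have "\<dots> = Add C (Cmp C g (Zero C X Y)) (Cmp C g (Zero C X Y))"
    using comp_add_left z g by blast
  finally show ?thesis using zero_if_add_self comp_hom z g by metis
qed

lemma comp_zero_left [simp]:
  assumes g: "g \<in> Hom C X Y" and Z: "Z \<in> Obj C"
  shows "Cmp C (Zero C Y Z) g = Zero C X Z"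
proof -
  have z: "Zero C Y Z \<in> Hom C Y Z" using Z g hom_objs by blast
  have "Cmp C (Zero C Y Z) g = Cmp C (Add C (Zero C Y Z) (Zero C Y Z)) g"
    using add_zero_right z by simp
  also have "\<dots> = Add C (Cmp C (Zero C Y Z) g) (Cmp C (Zero C Y Z) g)"
    using comp_add_right z g by blast
  finally show ?thesis using zero_if_add_self comp_hom z g by metis
qed

lemma neg_comp:
  assumes f: "f \<in> Hom C Y Z" and h: "h \<in> Hom C X Y"
  shows "Cmp C (Neg C f) h = Neg C (Cmp C f h)"
proof (rule neg_unique)
  show "Cmp C f h \<in> Hom C X Z" "Cmp C (Neg C f) h \<in> Hom C X Z" using f h by blast+
  have "Add C (Cmp C f h) (Cmp C (Neg C f) h) = Cmp C (Add C f (Neg C f)) h"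
    using comp_add_right f h neg_hom by metis
  also have "\<dots> = Zero C X Z" using add_neg f h comp_zero_left hom_objs by metis
  finally show "Add C (Cmp C f h) (Cmp C (Neg C f) h) = Zero C X Z" .
qed

lemma comp_neg:
  assumes f: "f \<in> Hom C X Y" and h: "h \<in> Hom C Y Z"
  shows "Cmp C h (Neg C f) = Neg C (Cmp C h f)"
proof (rule neg_unique)
  show "Cmp C h f \<in> Hom C X Z" "Cmp C h (Neg C f) \<in> Hom C X Z" using f h by blast+
  have "Add C (Cmp C h f) (Cmp C h (Neg C f)) = Cmp C h (Add C f (Neg C f))"
    using comp_add_left f h neg_hom by metis
  also have "\<dots> = Zero C X Z" using add_neg f h comp_zero_right hom_objs by metis
  finally show "Add C (Cmp C h f) (Cmp C h (Neg C f)) = Zero C X Z" .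
qed

lemma neg_neg [simp]: "f \<in> Hom C X Y \<Longrightarrow> Neg C (Neg C f) = f"
  by (metis add_commute add_neg neg_hom neg_unique)

lemma neg_zero [simp]: "X \<in> Obj C \<Longrightarrow> Y \<in> Obj C \<Longrightarrow> Neg C (Zero C X Y) = Zero C X Y"
  by (metis neg_unique zero_hom add_zero_right)

lemma eq_if_diff_zero:
  assumes f: "f \<in> Hom C X Y" and g: "g \<in> Hom C X Y" and diff: "Add C f (Neg C g) = Zero C X Y"
  shows "f = g"
proof -
  have "Add C (Neg C g) f = Zero C X Y" using diff add_commute f g neg_hom by metis
  hence "f = Neg C (Neg C g)" using neg_unique neg_hom f g by metis
  thus ?thesis using g by simp
qed

lemma comp_id_minus:
  assumes f: "f \<in> Hom C X X" and h: "h \<in> Hom C X Y"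
  shows "Cmp C h (Add C (Id C X) (Neg C f)) = Add C h (Neg C (Cmp C h f))"
  using comp_add_left[OF id_hom neg_hom[OF f] h] comp_neg[OF f h] h f hom_objs by simp

lemma comp_zero_if_comp_diff_zero:
  assumes A: "A \<in> Hom C Y N" and f: "f \<in> Hom C X Y" and g: "g \<in> Hom C X Y"
    and Af: "Cmp C A f = Zero C X N" and Afg: "Cmp C A (Add C f (Neg C g)) = Zero C X N"
  shows "Cmp C A g = Zero C X N"
proof -
  have "Neg C (Cmp C A g) = Cmp C A (Add C f (Neg C g))"
    using comp_add_left[OF f neg_hom[OF g] A] comp_neg[OF g A] Af add_zero_left comp_hom[OF g A] neg_hom
    by metis
  thus ?thesis using Afg by (metis neg_neg neg_zero comp_hom[OF g A] hom_objs)
qed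

lemma zero_if_neg_zero: "f \<in> Hom C X Y \<Longrightarrow> Neg C f = Zero C X Y \<Longrightarrow> f = Zero C X Y"
  by (metis neg_neg neg_zero hom_objs)

section \<open>The shift functor\<close>

lemma shift: "shift_ok C"
  using triangulated unfolding triangulated_def by (elim conjE) assumption

lemma shift_obj [intro]: "X \<in> Obj C \<Longrightarrow> Sh C X \<in> Obj C"
  using shift unfolding shift_ok_def by (elim conjE) simp

lemma shift_hom [intro]: "f \<in> Hom C X Y \<Longrightarrow> ShM C f \<in> Hom C (Sh C X) (Sh C Y)"
  using shift unfolding shift_ok_def by (elim conjE) simp

lemma shift_id: "X \<in> Obj C \<Longrightarrow> ShM C (Id C X) = Id C (Sh C X)"
  using shift unfolding shift_ok_def by (elim conjE) simp

lemma shift_comp: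
  "f \<in> Hom C X Y \<Longrightarrow> g \<in> Hom C Y Z \<Longrightarrow> ShM C (Cmp C g f) = Cmp C (ShM C g) (ShM C f)"
  using shift unfolding shift_ok_def by (elim conjE) simp

lemma shift_add:
  "f \<in> Hom C X Y \<Longrightarrow> g \<in> Hom C X Y \<Longrightarrow> ShM C (Add C f g) = Add C (ShM C f) (ShM C g)"
  using shift unfolding shift_ok_def by (elim conjE) simp

lemma shift_bij:
  "X \<in> Obj C \<Longrightarrow> Y \<in> Obj C \<Longrightarrow> bij_betw (ShM C) (Hom C X Y) (Hom C (Sh C X) (Sh C Y))"
  using shift unfolding shift_ok_def by (elim conjE) simp

lemma shift_ess_surj: "Y \<in> Obj C \<Longrightarrow> \<exists>X \<in> Obj C. iso_ob C (Sh C X) Y"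
  using shift unfolding shift_ok_def by (elim conjE) simp

lemma shift_inj:
  assumes f: "f \<in> Hom C X Y" and g: "g \<in> Hom C X Y" and eq: "ShM C f = ShM C g"
  shows "f = g"
  using bij_betw_imp_inj_on[OF shift_bij] inj_onD f g eq hom_objs by metis

lemma shift_full:
  assumes "X \<in> Obj C" and "Y \<in> Obj C" and "n \<in> Hom C (Sh C X) (Sh C Y)"
  obtains m where "m \<in> Hom C X Y" and "ShM C m = n"
  using bij_betw_imp_surj_on[OF shift_bij[OF assms(1,2)]] assms(3) by (metis imageE)

lemma shift_zero:
  assumes X: "X \<in> Obj C" and Y: "Y \<in> Obj C"
  shows "ShM C (Zero C X Y) = Zero C (Sh C X) (Sh C Y)"
proof -
  have z: "Zero C X Y \<in> Hom C X Y" using X Y by blast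
  have "ShM C (Zero C X Y) = Add C (ShM C (Zero C X Y)) (ShM C (Zero C X Y))"
    using shift_add z add_zero_right by metis
  thus ?thesis using zero_if_add_self[OF shift_hom[OF z]] by simp
qed

lemma shift_reflects_zero:
  assumes m: "m \<in> Hom C X Y" and trivial: "Hom C (Sh C X) (Sh C Y) = {Zero C (Sh C X) (Sh C Y)}"
  shows "m = Zero C X Y"
proof -
  have X: "X \<in> Obj C" and Y: "Y \<in> Obj C" using m hom_objs by auto
  have "ShM C m = ShM C (Zero C X Y)" using trivial shift_hom[OF m] shift_zero[OF X Y] by auto
  thus ?thesis using shift_inj m X Y by blast
qed

lemma is_iso_inverse:
  "is_iso C X Y f \<Longrightarrow> \<exists>g. is_iso C Y X g \<and> Cmp C g f = Id C X \<and> Cmp C f g = Id C Y"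
  unfolding is_iso_def by blast

lemma iso_ob_sym: "iso_ob C X Y \<Longrightarrow> iso_ob C Y X"
  unfolding iso_ob_def using is_iso_inverse by blast

lemma is_iso_id: "X \<in> Obj C \<Longrightarrow> is_iso C X X (Id C X)"
  unfolding is_iso_def by (metis comp_id_right id_hom)

section \<open>Distinguished triangles\<close>

lemma tri_homs:
  "(X, Y, Z, f, g, h) \<in> Tri C \<Longrightarrow> f \<in> Hom C X Y \<and> g \<in> Hom C Y Z \<and> h \<in> Hom C Z (Sh C X)"
  using triangulated unfolding triangulated_def is_triangle_def by fastforce

lemma tri_iso_closed:
  "t \<in> Tri C \<Longrightarrow> is_triangle C t' \<Longrightarrow> tri_mor C t t' u v w \<Longrightarrow>
    (case t of (X, Y, Z, _) \<Rightarrow> case t' of (X', Y', Z', _) \<Rightarrow>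
       is_iso C X X' u \<and> is_iso C Y Y' v \<and> is_iso C Z Z' w) \<Longrightarrow> t' \<in> Tri C"
  using triangulated unfolding triangulated_def by (elim conjE) blast

lemma tri_identity:
  "X \<in> Obj C \<Longrightarrow> zero_obj C Oz \<Longrightarrow> (X, X, Oz, Id C X, Zero C X Oz, Zero C Oz (Sh C X)) \<in> Tri C"
  using triangulated unfolding triangulated_def by (elim conjE) blast

lemma tri_cone_exists: "f \<in> Hom C X Y \<Longrightarrow> \<exists>Z g h. (X, Y, Z, f, g, h) \<in> Tri C"
  using triangulated unfolding triangulated_def by (elim conjE) blast

lemma tri_rotate_iff:
  "f \<in> Hom C X Y \<Longrightarrow> g \<in> Hom C Y Z \<Longrightarrow> h \<in> Hom C Z (Sh C X) \<Longrightarrow>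
    (X, Y, Z, f, g, h) \<in> Tri C \<longleftrightarrow> (Y, Z, Sh C X, g, h, Neg C (ShM C f)) \<in> Tri C"
  using triangulated unfolding triangulated_def by (elim conjE) blast

lemma tri_mor_exists:
  "(X, Y, Z, f, g, h) \<in> Tri C \<Longrightarrow> (X', Y', Z', f', g', h') \<in> Tri C \<Longrightarrow>
    u \<in> Hom C X X' \<Longrightarrow> v \<in> Hom C Y Y' \<Longrightarrow> Cmp C v f = Cmp C f' u \<Longrightarrow>
    \<exists>w. tri_mor C (X, Y, Z, f, g, h) (X', Y', Z', f', g', h') u v w"
  using triangulated unfolding triangulated_def by (elim conjE) metis

lemma octahedral:
  "(X, Y, Z', f, f2, f3) \<in> Tri C \<Longrightarrow> (Y, Z, X', g, g2, g3) \<in> Tri C \<Longrightarrow>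
    (X, Z, Y', Cmp C g f, h2, h3) \<in> Tri C \<Longrightarrow> \<exists>u v w. (Z', Y', X', u, v, w) \<in> Tri C"
  using triangulated unfolding triangulated_def by (elim conjE) metis

lemma tri_rotate:
  "(X, Y, Z, f, g, h) \<in> Tri C \<Longrightarrow> (Y, Z, Sh C X, g, h, Neg C (ShM C f)) \<in> Tri C"
  using tri_rotate_iff tri_homs by blast

lemma tri_rotate_back:
  assumes t: "(Y, Z, Sh C X, g, h, k) \<in> Tri C" and X: "X \<in> Obj C"
  obtains f where "(X, Y, Z, f, g, h) \<in> Tri C"
proof -
  have g: "g \<in> Hom C Y Z" and h: "h \<in> Hom C Z (Sh C X)" and k: "k \<in> Hom C (Sh C X) (Sh C Y)"
    using tri_homs[OF t] by auto
  have Y: "Y \<in> Obj C" using g hom_objs by blast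
  obtain f where f: "f \<in> Hom C X Y" and "ShM C f = Neg C k"
    using shift_full[OF X Y neg_hom[OF k]] by blast
  hence "Neg C (ShM C f) = k" using k by simp
  thus ?thesis using that tri_rotate_iff[OF f g h] t by simp
qed

lemma tri_iso_third:
  assumes t: "(X, Y, Z, f, g, h) \<in> Tri C" and j: "is_iso C Z Z' j"
  obtains g' h' where "(X, Y, Z', f, g', h') \<in> Tri C"
proof -
  obtain j' where j': "is_iso C Z' Z j'" and jj: "Cmp C j' j = Id C Z" using is_iso_inverse[OF j] by blast
  have f: "f \<in> Hom C X Y" and g: "g \<in> Hom C Y Z" and h: "h \<in> Hom C Z (Sh C X)"
    using tri_homs[OF t] by auto
  have jh: "j \<in> Hom C Z Z'" and j'h: "j' \<in> Hom C Z' Z" using j j' unfolding is_iso_def by auto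
  have X: "X \<in> Obj C" and Y: "Y \<in> Obj C" using f hom_objs by auto
  have "Cmp C (Cmp C h j') j = h" using comp_assoc[OF jh j'h h] jj h by simp
  hence "tri_mor C (X, Y, Z, f, g, h) (X, Y, Z', f, Cmp C j g, Cmp C h j') (Id C X) (Id C Y) j"
    unfolding tri_mor_def using X Y jh f g h shift_id[OF X] comp_id_right[OF comp_hom[OF g jh]] by auto
  moreover have "is_triangle C (X, Y, Z', f, Cmp C j g, Cmp C h j')"
    unfolding is_triangle_def using f g h jh j'h by auto
  ultimately have "(X, Y, Z', f, Cmp C j g, Cmp C h j') \<in> Tri C"
    using tri_iso_closed[OF t] is_iso_id[OF X] is_iso_id[OF Y] j by auto
  thus ?thesis using that by blast
qed

text \<open>The shift is only essentially surjective, so E is a suspension only up to isomorphism.\<close>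
lemma tri_desuspend:
  assumes t: "(Y, Z, E, g, h, k) \<in> Tri C"
  obtains K f h' where "iso_ob C (Sh C K) E" and "(K, Y, Z, f, g, h') \<in> Tri C"
proof -
  have "E \<in> Obj C" using tri_homs[OF t] hom_objs by blast
  then obtain K where K: "K \<in> Obj C" and iso: "iso_ob C (Sh C K) E" using shift_ess_surj by blast
  then obtain j where "is_iso C E (Sh C K) j" using iso_ob_sym unfolding iso_ob_def by blast
  then obtain h' k' where "(Y, Z, Sh C K, g, h', k') \<in> Tri C" using tri_iso_third[OF t] by blast
  then obtain f where "(K, Y, Z, f, g, h') \<in> Tri C" using tri_rotate_back K by blast
  thus ?thesis using that iso by blast
qed

lemma tri_comp_zero:
  assumes t: "(X, Y, Z, f, g, h) \<in> Tri C"
  shows "Cmp C g f = Zero C X Z"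
proof -
  have f: "f \<in> Hom C X Y" and X: "X \<in> Obj C" using tri_homs[OF t] hom_objs by auto
  obtain Oz where Oz: "zero_obj C Oz" using ex_zero_obj by blast
  obtain w where "tri_mor C (X, X, Oz, Id C X, Zero C X Oz, Zero C Oz (Sh C X)) (X, Y, Z, f, g, h)
      (Id C X) f w"
    using tri_mor_exists[OF tri_identity[OF X Oz] t id_hom[OF X] f] f by auto
  hence "w \<in> Hom C Oz Z" and "Cmp C w (Zero C X Oz) = Cmp C g f" unfolding tri_mor_def by auto
  thus ?thesis using X by simp
qed

lemma tri_comp_zero_shift:
  assumes t: "(X, Y, Z, f, g, h) \<in> Tri C"
  shows "Cmp C (ShM C f) h = Zero C Z (Sh C Y)"
proof -
  have f: "f \<in> Hom C X Y" and h: "h \<in> Hom C Z (Sh C X)" using tri_homs[OF t] by auto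
  have "Cmp C (Neg C (ShM C f)) h = Zero C Z (Sh C Y)"
    using tri_comp_zero[OF tri_rotate[OF tri_rotate[OF t]]] .
  hence "Neg C (Cmp C (ShM C f) h) = Zero C Z (Sh C Y)" using neg_comp[OF shift_hom[OF f] h] by simp
  thus ?thesis using zero_if_neg_zero comp_hom[OF h shift_hom[OF f]] by blast
qed

lemma tri_lift:
  assumes t: "(X, Y, Z, f, g, h) \<in> Tri C" and y: "y \<in> Hom C D Y" and gy: "Cmp C g y = Zero C D Z"
  obtains w where "w \<in> Hom C D X" and "Cmp C f w = y"
proof -
  have f: "f \<in> Hom C X Y" and g: "g \<in> Hom C Y Z" using tri_homs[OF t] by auto
  have D: "D \<in> Obj C" and X: "X \<in> Obj C" and Z: "Z \<in> Obj C" using y f g hom_objs by auto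
  obtain Oz where Oz: "zero_obj C Oz" using ex_zero_obj by blast
  have Ozo: "Oz \<in> Obj C" using Oz unfolding zero_obj_def by blast
  have "Cmp C (Zero C Oz Z) (Zero C D Oz) = Cmp C g y" using gy Z D Ozo zero_hom by simp
  then obtain w where "tri_mor C (D, Oz, Sh C D, Zero C D Oz, Zero C Oz (Sh C D), Neg C (ShM C (Id C D)))
      (Y, Z, Sh C X, g, h, Neg C (ShM C f)) y (Zero C Oz Z) w"
    using tri_mor_exists[OF tri_rotate[OF tri_identity[OF D Oz]] tri_rotate[OF t] y] Ozo Z by blast
  hence w: "w \<in> Hom C (Sh C D) (Sh C X)"
    and sq: "Cmp C (ShM C y) (Neg C (ShM C (Id C D))) = Cmp C (Neg C (ShM C f)) w"
    unfolding tri_mor_def by auto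
  have sy: "ShM C y \<in> Hom C (Sh C D) (Sh C Y)" and sf: "ShM C f \<in> Hom C (Sh C X) (Sh C Y)"
    using y f by blast+
  have "Neg C (ShM C y) = Neg C (Cmp C (ShM C f) w)"
    using sq neg_comp[OF sf w] comp_neg[OF id_hom[OF shift_obj[OF D]] sy] shift_id[OF D] sy
    by simp
  hence "ShM C y = Cmp C (ShM C f) w" by (metis neg_neg sy comp_hom w sf)
  obtain w' where w': "w' \<in> Hom C D X" and "ShM C w' = w" using shift_full[OF D X w] by blast
  hence "ShM C y = ShM C (Cmp C f w')" using \<open>ShM C y = _\<close> shift_comp[OF w' f] by simp
  hence "Cmp C f w' = y" using shift_inj[OF y comp_hom[OF w' f]] by simp
  thus ?thesis using that w' by blast
qed

lemma tri_extend:
  assumes t: "(X, Y, Z, f, g, h) \<in> Tri C" and y: "y \<in> Hom C Y D" and yf: "Cmp C y f = Zero C X D"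
  obtains w where "w \<in> Hom C Z D" and "Cmp C w g = y"
proof -
  have f: "f \<in> Hom C X Y" and g: "g \<in> Hom C Y Z" using tri_homs[OF t] by auto
  have D: "D \<in> Obj C" and X: "X \<in> Obj C" using y f hom_objs by auto
  obtain Oz where "zero_obj C Oz" using ex_zero_obj by blast
  then obtain K \<alpha> h' where "(K, D, D, \<alpha>, Id C D, h') \<in> Tri C"
    using tri_desuspend[OF tri_identity[OF D]] by metis
  moreover from this have "\<alpha> \<in> Hom C K D" and "K \<in> Obj C" using tri_homs hom_objs by blast+
  moreover from this have "Cmp C y f = Cmp C \<alpha> (Zero C X K)" using yf X by simp
  ultimately obtain w where "tri_mor C (X, Y, Z, f, g, h) (K, D, D, \<alpha>, Id C D, h') (Zero C X K) y w"
    using tri_mor_exists[OF t] X y by blast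
  hence "w \<in> Hom C Z D" and "Cmp C w g = y" unfolding tri_mor_def using y by auto
  thus ?thesis using that by blast
qed

text \<open>The connecting morphism l vanishes because s[1] l = 0 and s[1] has the retraction r[1].\<close>
lemma tri_section_split:
  assumes t: "(R, A, K, s, k, l) \<in> Tri C" and r: "r \<in> Hom C A R" and rs: "Cmp C r s = Id C R"
  obtains t where "t \<in> Hom C K A" and "Cmp C k t = Id C K"
proof -
  have s: "s \<in> Hom C R A" and k: "k \<in> Hom C A K" and l: "l \<in> Hom C K (Sh C R)"
    using tri_homs[OF t] by auto
  have R: "R \<in> Obj C" and K: "K \<in> Obj C" using s k hom_objs by auto
  have "Cmp C (ShM C r) (ShM C s) = Id C (Sh C R)" using shift_comp[OF s r] rs shift_id[OF R] by simp
  hence "l = Cmp C (Cmp C (ShM C r) (ShM C s)) l" using l by simp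
  also have "\<dots> = Cmp C (ShM C r) (Cmp C (ShM C s) l)"
    using comp_assoc[OF l shift_hom[OF s] shift_hom[OF r]] by simp
  also have "\<dots> = Zero C K (Sh C R)" using tri_comp_zero_shift[OF t] shift_hom[OF r] K by simp
  finally have "Cmp C l (Id C K) = Zero C K (Sh C R)" using l by simp
  thus ?thesis using tri_lift[OF tri_rotate[OF t] id_hom[OF K]] that by blast
qed

lemma tri_section_complement:
  assumes t: "(R, A, K, s, k, l) \<in> Tri C" and r: "r \<in> Hom C A R" and rs: "Cmp C r s = Id C R"
  obtains i where "i \<in> Hom C K A" and "Cmp C k i = Id C K" and "Cmp C r i = Zero C K R"
proof -
  have s: "s \<in> Hom C R A" and k: "k \<in> Hom C A K" using tri_homs[OF t] by auto
  have K: "K \<in> Obj C" using k hom_objs by auto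
  obtain t where t_hom: "t \<in> Hom C K A" and kt: "Cmp C k t = Id C K"
    using tri_section_split[OF t r rs] by blast
  define i where "i = Add C t (Neg C (Cmp C s (Cmp C r t)))"
  have rt: "Cmp C r t \<in> Hom C K R" using r t_hom by blast
  have srt: "Cmp C s (Cmp C r t) \<in> Hom C K A" using rt s by blast
  have "Cmp C r (Cmp C s (Cmp C r t)) = Cmp C r t" using comp_assoc[OF rt s r] rs rt by simp
  hence "Cmp C r i = Zero C K R"
    unfolding i_def using comp_add_left[OF t_hom neg_hom[OF srt] r] comp_neg[OF srt r] add_neg[OF rt]
    by simp
  moreover have "Cmp C k (Cmp C s (Cmp C r t)) = Zero C K K"
    using comp_assoc[OF rt s k] tri_comp_zero[OF t] rt K by simp
  hence "Cmp C k i = Id C K"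
    unfolding i_def using comp_add_left[OF t_hom neg_hom[OF srt] k] comp_neg[OF srt k] kt
      add_zero_right[OF id_hom[OF K]] neg_zero[OF K K] by simp
  moreover have "i \<in> Hom C K A" unfolding i_def using t_hom srt by blast
  ultimately show ?thesis using that by blast
qed

lemma section_biprod:
  assumes r: "r \<in> Hom C A R" and s: "s \<in> Hom C R A" and rs: "Cmp C r s = Id C R"
  shows "\<exists>K i p. biprod C R K A s i r p"
proof -
  obtain K k l where t: "(R, A, K, s, k, l) \<in> Tri C" using tri_cone_exists[OF s] by blast
  have k: "k \<in> Hom C A K" and ks: "Cmp C k s = Zero C R K" using tri_homs[OF t] tri_comp_zero[OF t] by auto
  have R: "R \<in> Obj C" and A: "A \<in> Obj C" and K: "K \<in> Obj C" using s k hom_objs by auto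
  obtain i where i: "i \<in> Hom C K A" and ki: "Cmp C k i = Id C K" and ri: "Cmp C r i = Zero C K R"
    using tri_section_complement[OF t r rs] by blast
  \<comment> \<open>e is killed by k, so e = s m, and then m = r e = 0\<close>
  define e where "e = Add C (Id C A) (Neg C (Add C (Cmp C s r) (Cmp C i k)))"
  have sr: "Cmp C s r \<in> Hom C A A" and ik: "Cmp C i k \<in> Hom C A A" using s r i k by blast+
  have sum: "Add C (Cmp C s r) (Cmp C i k) \<in> Hom C A A" using sr ik by blast
  have e: "e \<in> Hom C A A" unfolding e_def using sum A by blast
  have "Cmp C k e = Add C k (Neg C (Add C (Cmp C (Cmp C k s) r) (Cmp C (Cmp C k i) k)))"
    unfolding e_def comp_id_minus[OF sum k] comp_add_left[OF sr ik k]
      comp_assoc[OF r s k] comp_assoc[OF k i k] ..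
  also have "\<dots> = Zero C A K" using ks ki r k K add_zero_left[OF k] add_neg[OF k] by simp
  finally obtain m where m: "m \<in> Hom C A R" and sm: "Cmp C s m = e"
    using tri_lift[OF t e] by blast
  have "Cmp C r e = Add C r (Neg C (Add C (Cmp C (Cmp C r s) r) (Cmp C (Cmp C r i) k)))"
    unfolding e_def comp_id_minus[OF sum r] comp_add_left[OF sr ik r]
      comp_assoc[OF r s r] comp_assoc[OF k i r] ..
  also have "\<dots> = Zero C A R" using rs ri r k R add_zero_right[OF r] add_neg[OF r] by simp
  finally have "m = Zero C A R" using sm comp_assoc[OF m s r] rs m by simp
  hence "e = Zero C A A" using sm s A by simp
  hence "Add C (Cmp C s r) (Cmp C i k) = Id C A"
    using eq_if_diff_zero[OF id_hom[OF A] sum] unfolding e_def by simp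
  thus ?thesis unfolding biprod_def using s i r k rs ki ks ri by blast
qed

lemma zero_obj_iso:
  assumes O1: "zero_obj C O1" and O2: "zero_obj C O2"
  shows "iso_ob C O1 O2"
proof -
  have O1o: "O1 \<in> Obj C" and O2o: "O2 \<in> Obj C" using O1 O2 unfolding zero_obj_def by auto
  have "Hom C O1 O1 = {Zero C O1 O1}" "Hom C O2 O2 = {Zero C O2 O2}"
    using O1 O2 O1o O2o unfolding zero_obj_def by auto
  moreover have "Cmp C (Zero C O2 O1) (Zero C O1 O2) \<in> Hom C O1 O1"
    and "Cmp C (Zero C O1 O2) (Zero C O2 O1) \<in> Hom C O2 O2"
    using O1o O2o by blast+
  ultimately have "Cmp C (Zero C O2 O1) (Zero C O1 O2) = Id C O1"
    and "Cmp C (Zero C O1 O2) (Zero C O2 O1) = Id C O2"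
    using id_hom[OF O1o] id_hom[OF O2o] by auto
  thus ?thesis unfolding iso_ob_def is_iso_def using O1o O2o zero_hom by blast
qed

section \<open>Cotorsion pairs\<close>

lemma subcat_obj: "subcat C A \<Longrightarrow> X \<in> A \<Longrightarrow> X \<in> Obj C"
  unfolding subcat_def by blast

lemma subcat_iso: "subcat C A \<Longrightarrow> X \<in> A \<Longrightarrow> iso_ob C X Y \<Longrightarrow> Y \<in> A"
  unfolding subcat_def by blast

lemma subcat_summand: "subcat C A \<Longrightarrow> P \<in> A \<Longrightarrow> biprod C X Y P i1 i2 p1 p2 \<Longrightarrow> X \<in> A"
  unfolding subcat_def by blast

lemma subcat_zero_obj: "subcat C A \<Longrightarrow> zero_obj C Oz \<Longrightarrow> Oz \<in> A"
  unfolding subcat_def using zero_obj_iso by blast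

lemma hom_shift_up_zero:
  assumes orth: "\<forall>V1\<in>V. Hom C A (Sh C V1) = {Zero C A (Sh C V1)}"
    and N: "N \<in> shift_up C V" and m: "m \<in> Hom C A N"
  shows "m = Zero C A N"
proof -
  obtain V1 j where V1: "V1 \<in> V" and j: "is_iso C N (Sh C V1) j"
    using N unfolding shift_up_def iso_ob_def by blast
  obtain j' where j': "is_iso C (Sh C V1) N j'" and jj: "Cmp C j' j = Id C N"
    using is_iso_inverse[OF j] by blast
  have jh: "j \<in> Hom C N (Sh C V1)" and j'h: "j' \<in> Hom C (Sh C V1) N"
    using j j' unfolding is_iso_def by auto
  have A: "A \<in> Obj C" using m hom_objs by blast
  have "Cmp C j m = Zero C A (Sh C V1)" using orth V1 comp_hom[OF m jh] by blast
  hence "Cmp C j' (Cmp C j m) = Zero C A N" using j'h A by simp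
  thus ?thesis using comp_assoc[OF m jh j'h] jj m by simp
qed

text \<open>Y is a retract of its U-approximation, as the map from Y to the V[1]-part vanishes.\<close>
lemma cotorsion_left_if_orth:
  assumes cp: "cotorsion_pair C U V" and Y: "Y \<in> Obj C"
    and orth: "\<forall>V1\<in>V. Hom C Y (Sh C V1) = {Zero C Y (Sh C V1)}"
  shows "Y \<in> U"
proof -
  have "Y \<in> ext_star C U (shift_up C V)" using cp Y unfolding cotorsion_pair_def by simp
  then obtain A N f g h where A: "A \<in> U" and N: "N \<in> shift_up C V" and t: "(A, Y, N, f, g, h) \<in> Tri C"
    unfolding ext_star_def by blast
  have g: "g \<in> Hom C Y N" using tri_homs[OF t] by auto
  hence "Cmp C g (Id C Y) = Zero C Y N" using hom_shift_up_zero[OF orth N] by simp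
  then obtain s where "s \<in> Hom C Y A" and "Cmp C f s = Id C Y"
    using tri_lift[OF t id_hom[OF Y]] by blast
  then obtain K i p where "biprod C Y K A s i f p" using section_biprod tri_homs[OF t] by blast
  thus ?thesis using subcat_summand A cp unfolding cotorsion_pair_def by blast
qed

lemma cotorsion_left_ext_closed:
  assumes cp: "cotorsion_pair C U V" and t: "(A, Y, B, f, g, h) \<in> Tri C"
    and A: "A \<in> U" and B: "B \<in> U"
  shows "Y \<in> U"
proof (rule cotorsion_left_if_orth[OF cp])
  have f: "f \<in> Hom C A Y" and g: "g \<in> Hom C Y B" using tri_homs[OF t] by auto
  show Y: "Y \<in> Obj C" using f hom_objs by blast
  have E: "Ext1_zero C U V" using cp unfolding cotorsion_pair_def by blast
  show "\<forall>V1\<in>V. Hom C Y (Sh C V1) = {Zero C Y (Sh C V1)}"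
  proof
    fix V1 assume V1: "V1 \<in> V"
    have SV: "Sh C V1 \<in> Obj C" using V1 cp subcat_obj shift_obj unfolding cotorsion_pair_def by blast
    have "m = Zero C Y (Sh C V1)" if m: "m \<in> Hom C Y (Sh C V1)" for m
    proof -
      have "Cmp C m f = Zero C A (Sh C V1)" using E A V1 comp_hom[OF f m] unfolding Ext1_zero_def by blast
      then obtain m' where m': "m' \<in> Hom C B (Sh C V1)" and "Cmp C m' g = m"
        using tri_extend[OF t m] by blast
      moreover have "m' = Zero C B (Sh C V1)" using E B V1 m' unfolding Ext1_zero_def by blast
      ultimately show ?thesis using g SV by simp
    qed
    thus "Hom C Y (Sh C V1) = {Zero C Y (Sh C V1)}" using zero_hom[OF Y SV] by blast
  qed
qed

text \<open>Approximate Y[1] by the pair (S, T) and rotate back.\<close>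
lemma cotorsion_coresolution:
  assumes cp: "cotorsion_pair C S T" and Y: "Y \<in> Obj C"
  obtains T1 S1 f g h where "T1 \<in> T" and "S1 \<in> S" and "(Y, T1, S1, f, g, h) \<in> Tri C"
proof -
  have "Sh C Y \<in> ext_star C S (shift_up C T)" using cp Y shift_obj unfolding cotorsion_pair_def by auto
  then obtain S1 N f g h where S1: "S1 \<in> S" and N: "N \<in> shift_up C T"
    and t: "(S1, Sh C Y, N, f, g, h) \<in> Tri C"
    unfolding ext_star_def by blast
  obtain T1 j where T1: "T1 \<in> T" and "is_iso C N (Sh C T1) j"
    using N unfolding shift_up_def iso_ob_def by blast
  then obtain g' h' where "(S1, Sh C Y, Sh C T1, f, g', h') \<in> Tri C" using tri_iso_third[OF t] by blast
  moreover have "T1 \<in> Obj C" using T1 cp subcat_obj unfolding cotorsion_pair_def by blast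
  ultimately obtain f1 where "(T1, S1, Sh C Y, f1, f, g') \<in> Tri C" using tri_rotate_back by blast
  then obtain f2 where "(Y, T1, S1, f2, f1, f) \<in> Tri C" using tri_rotate_back Y by blast
  thus ?thesis using that T1 S1 by blast
qed

end

locale twin_cotorsion = triangulated_cat C for C :: "('o, 'm) tcat" +
  fixes S T U V :: "'o set"
  assumes twin: "twin_cotorsion_pair C S T U V"
begin

lemma cotorsion_ST: "cotorsion_pair C S T"
  using twin unfolding twin_cotorsion_pair_def by blast

lemma cotorsion_UV: "cotorsion_pair C U V"
  using twin unfolding twin_cotorsion_pair_def by blast

lemma S_subset_U: "S1 \<in> S \<Longrightarrow> S1 \<in> U"
  using twin cotorsion_left_if_orth[OF cotorsion_UV] subcat_obj
  unfolding twin_cotorsion_pair_def cotorsion_pair_def Ext1_zero_def by blast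

lemma hom_U_shift_up_V_zero:
  assumes "A \<in> U" and "N \<in> shift_up C V" and "m \<in> Hom C A N"
  shows "m = Zero C A N"
proof (rule hom_shift_up_zero[OF _ assms(2,3)])
  show "\<forall>V1\<in>V. Hom C A (Sh C V1) = {Zero C A (Sh C V1)}"
    using cotorsion_UV assms(1) unfolding cotorsion_pair_def Ext1_zero_def by blast
qed

lemma comp_factors_through_W_zero:
  assumes N: "N \<in> shift_up C V" and q: "q \<in> Hom C D N"
    and m: "factors_through C (Wcore T U) Y D m"
  shows "Cmp C q m = Zero C Y N"
proof -
  obtain W0 u v where "W0 \<in> U" and u: "u \<in> Hom C Y W0" and v: "v \<in> Hom C W0 D" and "m = Cmp C v u"
    using m unfolding factors_through_def Wcore_def by blast
  moreover from this have "Cmp C q v = Zero C W0 N" using hom_U_shift_up_V_zero N q by blast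
  ultimately show ?thesis using comp_assoc[OF u v q] u q hom_objs by simp
qed

lemma quot_eq_refl:
  assumes f: "f \<in> Hom C X Y"
  shows "quot_eq C (Wcore T U) X Y f f"
proof -
  obtain Oz where Oz: "zero_obj C Oz" using ex_zero_obj by blast
  hence "Oz \<in> Wcore T U"
    using subcat_zero_obj cotorsion_ST cotorsion_UV unfolding Wcore_def cotorsion_pair_def by blast
  moreover have X: "X \<in> Obj C" and Y: "Y \<in> Obj C" and "Oz \<in> Obj C"
    using f Oz hom_objs unfolding zero_obj_def by auto
  moreover have "Add C f (Neg C f) = Cmp C (Zero C Oz Y) (Zero C X Oz)"
    using add_neg[OF f] comp_zero_left[OF zero_hom[OF X \<open>Oz \<in> Obj C\<close>] Y] by simp
  ultimately show ?thesis unfolding quot_eq_def factors_through_def using f by blast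
qed

lemma CplusE:
  assumes "D \<in> Cplus C T U V"
  obtains W0 N i q r where "W0 \<in> Wcore T U" and "N \<in> shift_up C V" and "(W0, D, N, i, q, r) \<in> Tri C"
  using assms unfolding Cplus_def ext_star_def by blast

text \<open>The octahedron on the composite a b exhibits Z as an extension of T[-1][1] by V0[1];
T[-1][1] lies in U as an extension of U' by S[-1][1].\<close>
lemma cone_mem_Cplus:
  assumes ta: "(V0, U', X, a1, a, a3) \<in> Tri C" and U': "U' \<in> U" and V0: "V0 \<in> V"
    and tb: "(Tm, Sm, U', b1, b, b3) \<in> Tri C" and Sm: "Sh C Sm \<in> S" and Tm: "Sh C Tm \<in> T"
    and tz: "(Sm, X, Z, Cmp C a b, z, z3) \<in> Tri C"
  shows "Z \<in> Cplus C T U V"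
proof -
  have "Sh C Tm \<in> U"
    using cotorsion_left_ext_closed[OF cotorsion_UV tri_rotate[OF tri_rotate[OF tb]] U' S_subset_U[OF Sm]] .
  hence W: "Sh C Tm \<in> Wcore T U" using Tm unfolding Wcore_def by blast
  obtain u v w where t: "(Sh C Tm, Z, Sh C V0, u, v, w) \<in> Tri C"
    using octahedral[OF tri_rotate[OF tb] tri_rotate[OF ta] tz] by blast
  have "V0 \<in> Obj C" using V0 subcat_obj cotorsion_UV unfolding cotorsion_pair_def by blast
  hence "Sh C V0 \<in> shift_up C V" unfolding shift_up_def iso_ob_def using V0 is_iso_id by blast
  moreover have "Z \<in> Obj C" using tri_homs[OF t] hom_objs by blast
  ultimately show ?thesis unfolding Cplus_def ext_star_def using W t by blast
qed

text \<open>With M \<rightarrow> X \<rightarrow> W0 as in the definition of C^-, the cone Y of M \<rightarrow> Z lies in U.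
An (S, T)-coresolution Y \<rightarrow> T1 \<rightarrow> S1 has T1 \<in> W, and a second octahedron shows that the
cone of Z \<rightarrow> Y \<rightarrow> T1 is an extension of M[1] by S1, hence in S.\<close>
lemma cone_mem_Cminus:
  assumes X: "X \<in> Cminus C S T U" and tz: "(Sm, X, Z, c, z, z3) \<in> Tri C" and Sm: "Sh C Sm \<in> S"
  shows "Z \<in> Cminus C S T U"
proof -
  obtain M W0 p q r where M: "Sh C M \<in> S" and W0: "W0 \<in> Wcore T U" and tp: "(M, X, W0, p, q, r) \<in> Tri C"
    using X unfolding Cminus_def ext_star_def shift_down_def by blast
  have p: "p \<in> Hom C M X" and z: "z \<in> Hom C X Z" using tri_homs[OF tp] tri_homs[OF tz] by auto
  obtain Y h2 h3 where tY: "(M, Z, Y, Cmp C z p, h2, h3) \<in> Tri C"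
    using tri_cone_exists[OF comp_hom[OF p z]] by blast
  obtain u v w where "(W0, Y, Sh C Sm, u, v, w) \<in> Tri C"
    using octahedral[OF tp tri_rotate[OF tz] tY] by blast
  hence YU: "Y \<in> U"
    using cotorsion_left_ext_closed[OF cotorsion_UV] W0 S_subset_U[OF Sm] unfolding Wcore_def by blast
  hence "Y \<in> Obj C" using subcat_obj cotorsion_UV unfolding cotorsion_pair_def by blast
  then obtain T1 S1 f g k where T1: "T1 \<in> T" and S1: "S1 \<in> S" and tT: "(Y, T1, S1, f, g, k) \<in> Tri C"
    using cotorsion_coresolution[OF cotorsion_ST] by blast
  have "T1 \<in> U" using cotorsion_left_ext_closed[OF cotorsion_UV tT YU S_subset_U[OF S1]] .
  hence W1: "T1 \<in> Wcore T U" using T1 unfolding Wcore_def by blast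
  have h2: "h2 \<in> Hom C Z Y" and f: "f \<in> Hom C Y T1" using tri_homs[OF tY] tri_homs[OF tT] by auto
  obtain E e2 e3 where tE: "(Z, T1, E, Cmp C f h2, e2, e3) \<in> Tri C"
    using tri_cone_exists[OF comp_hom[OF h2 f]] by blast
  obtain u' v' w' where "(Sh C M, E, S1, u', v', w') \<in> Tri C"
    using octahedral[OF tri_rotate[OF tY] tT tE] by blast
  hence ES: "E \<in> S" using cotorsion_left_ext_closed[OF cotorsion_ST _ M S1] by blast
  obtain K f3 h' where "iso_ob C (Sh C K) E" and tK: "(K, Z, T1, f3, Cmp C f h2, h') \<in> Tri C"
    using tri_desuspend[OF tE] by blast
  hence "Sh C K \<in> S" using subcat_iso ES iso_ob_sym cotorsion_ST unfolding cotorsion_pair_def by blast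
  moreover have "K \<in> Obj C" and "Z \<in> Obj C" using tri_homs[OF tK] hom_objs by auto
  ultimately show ?thesis unfolding Cminus_def ext_star_def shift_down_def using tK W1 by blast
qed

text \<open>c factors through the W-part of B, which lies in T, and Ext^1(S, T) = 0.\<close>
lemma comp_shift_S_to_Cplus_zero:
  assumes B: "B \<in> Cplus C T U V" and U': "U' \<in> U" and Sm: "Sh C Sm \<in> S"
    and b: "b \<in> Hom C Sm U'" and c: "c \<in> Hom C U' B"
  shows "Cmp C c b = Zero C Sm B"
proof -
  obtain W1 N i q r where W1: "W1 \<in> Wcore T U" and N: "N \<in> shift_up C V"
    and tB: "(W1, B, N, i, q, r) \<in> Tri C"
    using CplusE[OF B] by blast
  have i: "i \<in> Hom C W1 B" and q: "q \<in> Hom C B N" using tri_homs[OF tB] by auto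
  have "Cmp C q c = Zero C U' N" using hom_U_shift_up_V_zero[OF U' N comp_hom[OF c q]] .
  then obtain c' where c': "c' \<in> Hom C U' W1" and ic: "Cmp C i c' = c" using tri_lift[OF tB c] by blast
  have "Hom C (Sh C Sm) (Sh C W1) = {Zero C (Sh C Sm) (Sh C W1)}"
    using cotorsion_ST Sm W1 unfolding cotorsion_pair_def Ext1_zero_def Wcore_def by blast
  hence "Cmp C c' b = Zero C Sm W1" using shift_reflects_zero comp_hom[OF b c'] by blast
  thus ?thesis using ic comp_assoc[OF b c' i] i b hom_objs by auto
qed

lemma hom_cone_U_zero:
  assumes tx: "(X, B, Uo, x, x2, x3) \<in> Tri C" and Uo: "Uo \<in> U" and N: "N \<in> shift_up C V"
    and A: "A \<in> Hom C B N" and Ax: "Cmp C A x = Zero C X N"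
  shows "A = Zero C B N"
proof -
  obtain r where "r \<in> Hom C Uo N" and "Cmp C r x2 = A" using tri_extend[OF tx A Ax] by blast
  moreover from this have "r = Zero C Uo N" using hom_U_shift_up_V_zero Uo N by blast
  ultimately show ?thesis using tri_homs[OF tx] A hom_objs by auto
qed

lemma quot_epi_if_cone_in_U:
  assumes tx: "(X, B, Uo, x, x2, x3) \<in> Tri C" and Uo: "Uo \<in> U"
    and Z: "Z \<in> Hcore C S T U V" and B: "B \<in> Hcore C S T U V"
    and \<zeta>: "\<zeta> \<in> Hom C Z B" and z: "z \<in> Hom C X Z"
    and eq: "quot_eq C (Wcore T U) X B (Cmp C \<zeta> z) x"
  shows "quot_epi C (Wcore T U) (Hcore C S T U V) Z B \<zeta>"
  unfolding quot_epi_def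
proof (intro conjI ballI impI Z B \<zeta>)
  fix D g h
  assume D: "D \<in> Hcore C S T U V" and g: "g \<in> Hom C B D" and h: "h \<in> Hom C B D"
    and gh: "quot_eq C (Wcore T U) Z D (Cmp C g \<zeta>) (Cmp C h \<zeta>)"
  define k where "k = Add C g (Neg C h)"
  have k: "k \<in> Hom C B D" unfolding k_def using g h by blast
  obtain W4 N i q r where W4: "W4 \<in> Wcore T U" and N: "N \<in> shift_up C V"
    and tD: "(W4, D, N, i, q, r) \<in> Tri C"
    using D CplusE unfolding Hcore_def by blast
  have i: "i \<in> Hom C W4 D" and q: "q \<in> Hom C D N" using tri_homs[OF tD] by auto
  define A where "A = Cmp C q k"
  have A: "A \<in> Hom C B N" unfolding A_def using k q by blast
  have "Cmp C k \<zeta> = Add C (Cmp C g \<zeta>) (Neg C (Cmp C h \<zeta>))"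
    unfolding k_def using comp_add_right[OF g neg_hom[OF h] \<zeta>] neg_comp[OF h \<zeta>] by simp
  hence "Cmp C q (Cmp C k \<zeta>) = Zero C Z N"
    using comp_factors_through_W_zero[OF N q] gh unfolding quot_eq_def by simp
  hence "Cmp C A \<zeta> = Zero C Z N" unfolding A_def using comp_assoc[OF \<zeta> k q] by simp
  hence "Cmp C A (Cmp C \<zeta> z) = Zero C X N" using comp_assoc[OF z \<zeta> A] z A hom_objs by simp
  moreover have "Cmp C A (Add C (Cmp C \<zeta> z) (Neg C x)) = Zero C X N"
    using comp_factors_through_W_zero[OF N A] eq unfolding quot_eq_def by blast
  ultimately have "Cmp C A x = Zero C X N"
    using comp_zero_if_comp_diff_zero A eq unfolding quot_eq_def by blast
  hence "Cmp C q k = Zero C B N" using hom_cone_U_zero[OF tx Uo N A] unfolding A_def by blast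
  then obtain k' where "k' \<in> Hom C B W4" and "k = Cmp C i k'" using tri_lift[OF tD k] by metis
  thus "quot_eq C (Wcore T U) B D g h"
    unfolding quot_eq_def factors_through_def using g h W4 i unfolding k_def by blast
qed

end

theorem lemma5p2:
  fixes C :: "('o, 'm) tcat"
    and S T U V :: "'o set"
    and X B Uo Z U' V0 Sm Tm :: 'o
    and x x2 x3 a a1 a3 b b1 b3 zX zX3 :: 'm
  assumes tri: "triangulated C"
    and twin: "twin_cotorsion_pair C S T U V"
    and X_minus: "X \<in> Cminus C S T U"
    and B_H: "B \<in> Hcore C S T U V"
    and x_hom: "x \<in> Hom C X B"
    and tri_x: "(X, B, Uo, x, x2, x3) \<in> Tri C" and Uo_U: "Uo \<in> U"
    \<comment> \<open>V --> U' --a--> X --> V[1]\<close>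
    and tri_a: "(V0, U', X, a1, a, a3) \<in> Tri C" and U'_U: "U' \<in> U" and V0_V: "V0 \<in> V"
    \<comment> \<open>T[-1] --> S[-1] --b--> U' --> T, with Tm = T[-1], Sm = S[-1]\<close>
    and tri_b: "(Tm, Sm, U', b1, b, b3) \<in> Tri C"
    and Sm_S: "Sh C Sm \<in> S" and Tm_T: "Sh C Tm \<in> T"
    \<comment> \<open>S[-1] --a b--> X --z_X--> Z_X --> S\<close>
    and tri_z: "(Sm, X, Z, Cmp C a b, zX, zX3) \<in> Tri C"
  shows "Z \<in> Hcore C S T U V \<and>
    (\<exists>\<zeta>. \<zeta> \<in> Hom C Z B \<and> quot_eq C (Wcore T U) X B (Cmp C \<zeta> zX) x) \<and>
    (\<forall>\<zeta>. \<zeta> \<in> Hom C Z B \<longrightarrow> quot_eq C (Wcore T U) X B (Cmp C \<zeta> zX) x \<longrightarrow>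
       quot_epi C (Wcore T U) (Hcore C S T U V) Z B \<zeta>)"
proof -
  interpret twin_cotorsion C S T U V
    by (intro twin_cotorsion.intro triangulated_cat.intro twin_cotorsion_axioms.intro tri twin)
  have a: "a \<in> Hom C U' X" and b: "b \<in> Hom C Sm U'" and zX: "zX \<in> Hom C X Z"
    using tri_homs[OF tri_a] tri_homs[OF tri_b] tri_homs[OF tri_z] by auto
  have Z_H: "Z \<in> Hcore C S T U V"
    unfolding Hcore_def using cone_mem_Cplus[OF tri_a U'_U V0_V tri_b Sm_S Tm_T tri_z]
      cone_mem_Cminus[OF X_minus tri_z Sm_S] by blast
  have "B \<in> Cplus C T U V" using B_H unfolding Hcore_def by blast
  hence "Cmp C x (Cmp C a b) = Zero C Sm B"
    using comp_shift_S_to_Cplus_zero[OF _ U'_U Sm_S b comp_hom[OF a x_hom]] comp_assoc[OF b a x_hom]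
    by simp
  then obtain \<zeta> where "\<zeta> \<in> Hom C Z B" and "Cmp C \<zeta> zX = x" using tri_extend[OF tri_z x_hom] by blast
  hence "\<exists>\<zeta>. \<zeta> \<in> Hom C Z B \<and> quot_eq C (Wcore T U) X B (Cmp C \<zeta> zX) x"
    using quot_eq_refl[OF x_hom] by auto
  thus ?thesis using Z_H quot_epi_if_cone_in_U[OF tri_x Uo_U Z_H B_H _ zX] by blast
qed

end
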